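(* Consider the multiplicative symmetric QRT map given by the recurrence $$u_{n+1}u_{n-1}=\frac{a_3u_n^2+a_5u_n+a_6}{a_1u_n^2+a_2u_n+a_3},$$ with generic coefficients $a_1,a_2,a_3,a_5,a_6$. Then for every $n\ge0$, the iterate $u_n$, regarded as a rational function of the initial values $u_0,u_1$, has degree $n^2-n+1$.
   Context: "Generic" means e.g. that the coefficients are independent indeterminates (in particular nonzero and with $a_1^2a_6^2-a_1a_2a_5a_6-2a_1a_3^2a_6+a_1a_3a_5^2+a_2^2a_3a_6-a_2a_3^2a_5+a_3^4\neq0$). The degree of a rational function in $u_0,u_1$ is the maximum of the total degrees of the numerator and denominator when it is written as a ratio of coprime polynomials. *)

theory Defs
  imports "HOL-Computational_Algebra.Polynomial" "HOL-Computational_Algebra.Fraction_Field"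
begin

text \<open>Base field: Q(a1,a2,a3,a5,a6), built as an iterated rational function field,
  so that the coefficients are independent indeterminates (generic).\<close>

type_synonym K1 = "rat poly fract"
type_synonym K2 = "K1 poly fract"
type_synonym K3 = "K2 poly fract"
type_synonym K4 = "K3 poly fract"
type_synonym K5 = "K4 poly fract"

definition lift :: "'a::idom \<Rightarrow> 'a poly fract" where
  "lift c = Fract [:c:] 1"

definition var :: "'a::idom poly fract" where
  "var = Fract [:0, 1:] 1"

definition a1 :: K5 where "a1 = lift (lift (lift (lift (var :: K1))))"
definition a2 :: K5 where "a2 = lift (lift (lift (var :: K2)))"
definition a3 :: K5 where "a3 = lift (lift (var :: K3))"
definition a5 :: K5 where "a5 = lift (var :: K4)"
definition a6 :: K5 where "a6 = (var :: K5)"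

text \<open>Bivariate polynomials over K5 in u0, u1: a polynomial in u1 whose coefficients are
  polynomials in u0.  The rational functions in u0,u1 form the fraction field.\<close>

type_synonym bipoly = "K5 poly poly"
type_synonym ratfun = "bipoly fract"

definition tdeg :: "bipoly \<Rightarrow> nat" where
  "tdeg p = Max (insert 0 {i + degree (coeff p i) | i. coeff p i \<noteq> 0})"

definition U0 :: ratfun where "U0 = Fract [:[:0, 1:]:] 1"
definition U1 :: ratfun where "U1 = Fract [:0, 1:] 1"

definition cst :: "K5 \<Rightarrow> ratfun" where "cst c = Fract [:[:c:]:] 1"

fun qrt_u :: "nat \<Rightarrow> ratfun" where
  "qrt_u 0 = U0"
| "qrt_u (Suc 0) = U1"
| "qrt_u (Suc (Suc n)) =
     (cst a3 * (qrt_u (Suc n))^2 + cst a5 * qrt_u (Suc n) + cst a6) /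
     ((cst a1 * (qrt_u (Suc n))^2 + cst a2 * qrt_u (Suc n) + cst a3) * qrt_u n)"

end

theory Submission
  imports Defs "HOL-Computational_Algebra.Polynomial_Factorial"
    "HOL-Computational_Algebra.Field_as_Ring"
begin

text \<open>
  Write u(n) = N(n) / D(n) with N(n) = c(n) A(n) and D(n) = c(n+2) B(n), where c(n) runs
  periodically through u0, u1, 1, 1, and A, B are defined by the divisions
  A(n+1) A(n-1) = F(N(n), D(n)) and B(n+1) B(n-1) = G(N(n), D(n)), with F and G the quadratic
  forms in the numerator and denominator of the map.  The divisions are exact (a Laurent
  phenomenon): modulo A(n+1), the product (A(n) B(n))^2 F(N(n+2), D(n+2)) is a multiple of
  F(N(n), D(n)) = A(n+1) A(n-1), and A(n+1) is coprime to A(n) B(n).  As the resultant of F and G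
  is nonzero, F(N, D) and G(N, D) are coprime whenever N and D are; together with the nonzero
  constant terms of A(n), B(n) this keeps N(n) / D(n) in lowest terms.  Exactly one of N(n), D(n)
  carries the linear factor c, so deg F(N(n), D(n)) = 2 deg A(n) + 2, and the recurrence
  deg A(n+1) + deg A(n-1) = 2 deg A(n) + 2 gives deg A(n) = deg B(n) = n(n - 1).
\<close>

text \<open>Fraction fields as Euclidean rings, so that polynomials over them have gcds.\<close>

instantiation fract :: (idom)
  "{unique_euclidean_ring, normalization_euclidean_semiring, normalization_semidom_multiplicative}"
begin
definition [simp]: "normalize_fract = (normalize_field :: 'a fract \<Rightarrow> _)"
definition [simp]: "unit_factor_fract = (unit_factor_field :: 'a fract \<Rightarrow> _)"
definition [simp]: "modulo_fract = (mod_field :: 'a fract \<Rightarrow> _)"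
definition [simp]: "euclidean_size_fract = (euclidean_size_field :: 'a fract \<Rightarrow> _)"
definition [simp]: "division_segment (x :: 'a fract) = 1"
instance
  by standard (simp_all add: dvd_field_iff field_split_simps split: if_splits)
end

instantiation fract :: (idom) euclidean_ring_gcd
begin
definition gcd_fract :: "'a fract \<Rightarrow> 'a fract \<Rightarrow> 'a fract" where
  "gcd_fract = Euclidean_Algorithm.gcd"
definition lcm_fract :: "'a fract \<Rightarrow> 'a fract \<Rightarrow> 'a fract" where
  "lcm_fract = Euclidean_Algorithm.lcm"
definition Gcd_fract :: "'a fract set \<Rightarrow> 'a fract" where
  "Gcd_fract = Euclidean_Algorithm.Gcd"
definition Lcm_fract :: "'a fract set \<Rightarrow> 'a fract" where
  "Lcm_fract = Euclidean_Algorithm.Lcm"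
instance by standard (simp_all add: gcd_fract_def lcm_fract_def Gcd_fract_def Lcm_fract_def)
end

instance fract :: (idom) field_gcd ..

lemma map_poly_add_hom:
  assumes "f 0 = 0" and "\<And>x y. f (x + y) = f x + f y"
  shows "map_poly f (p + q) = map_poly f p + map_poly f q"
  by (rule poly_eqI) (simp add: coeff_map_poly assms)

lemma map_poly_mult_hom:
  assumes f0: "f 0 = 0" and f_add: "\<And>x y. f (x + y) = f x + f y"
    and f_mult: "\<And>x y. f (x * y) = f x * f y"
  shows "map_poly f (p * q) = map_poly f p * map_poly f q"
proof (rule poly_eqI)
  fix n
  have "coeff (map_poly f (p * q)) n = f (\<Sum>i\<le>n. coeff p i * coeff q (n - i))"
    by (simp add: coeff_map_poly f0 coeff_mult)
  also have "\<dots> = (\<Sum>i\<le>n. f (coeff p i * coeff q (n - i)))"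
    using sum_comp_morphism[of f _ "{..n}", OF f0 f_add] by (simp add: o_def)
  also have "\<dots> = coeff (map_poly f p * map_poly f q) n"
    by (simp add: coeff_mult coeff_map_poly f0 f_mult)
  finally show "coeff (map_poly f (p * q)) n = coeff (map_poly f p * map_poly f q) n" .
qed

section \<open>Total degree\<close>

text \<open>Substituting \<open>u\<^sub>0 := z w\<close>, \<open>u\<^sub>1 := z\<close> is an injective ring homomorphism
  that turns the total degree in \<open>u\<^sub>0, u\<^sub>1\<close> into the degree in \<open>z\<close>.\<close>

definition diag_embed :: "'a::comm_semiring_1 poly \<Rightarrow> 'a poly poly" where
  "diag_embed q = poly (map_poly (\<lambda>c. [:[:c:]:]) q) (monom (monom 1 1) 1)"

definition grade_embed :: "'a::comm_semiring_1 poly poly \<Rightarrow> 'a poly poly" where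
  "grade_embed p = poly (map_poly diag_embed p) [:0, 1:]"

lemma diag_embed_add: "diag_embed (p + q) = diag_embed p + diag_embed q"
  by (simp add: diag_embed_def map_poly_add_hom)

lemma diag_embed_mult: "diag_embed (p * q) = diag_embed p * diag_embed q"
  by (simp add: diag_embed_def map_poly_mult_hom)

lemma diag_embed_0 [simp]: "diag_embed 0 = 0"
  by (simp add: diag_embed_def)

lemma diag_embed_1 [simp]: "diag_embed 1 = 1"
  by (simp add: diag_embed_def one_pCons map_poly_pCons)

lemma diag_embed_pCons: "diag_embed (pCons a q) = [:[:a:]:] + monom (monom 1 1) 1 * diag_embed q"
  by (simp add: diag_embed_def map_poly_pCons)

lemma coeff_diag_embed: "coeff (diag_embed q) m = monom (coeff q m) m"
proof (induction q arbitrary: m)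
  case (pCons a q)
  then show ?case
    by (cases m) (simp_all add: diag_embed_pCons coeff_monom_mult mult_monom monom_0)
qed simp

lemma grade_embed_0 [simp]: "grade_embed 0 = 0"
  by (simp add: grade_embed_def)

lemma grade_embed_pCons: "grade_embed (pCons q p) = diag_embed q + [:0, 1:] * grade_embed p"
  by (simp add: grade_embed_def map_poly_pCons)

lemma coeff_coeff_grade_embed:
  "coeff (coeff (grade_embed p) k) m = (if m \<le> k then coeff (coeff p (k - m)) m else 0)"
proof (induction p arbitrary: k)
  case (pCons q p)
  then show ?case
    by (cases k) (auto simp: grade_embed_pCons coeff_diag_embed coeff_pCons coeff_monom
        Suc_diff_le le_Suc_eq split: nat.split)
qed (simp add: grade_embed_def)

lemma grade_embed_add: "grade_embed (p + q) = grade_embed p + grade_embed q"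
  by (simp add: grade_embed_def map_poly_add_hom diag_embed_add)

lemma grade_embed_mult: "grade_embed (p * q) = grade_embed p * grade_embed q"
  by (simp add: grade_embed_def map_poly_mult_hom diag_embed_add diag_embed_mult)

lemma grade_embed_eq_0_iff [simp]: "grade_embed p = 0 \<longleftrightarrow> p = 0"
proof
  assume "grade_embed p = 0"
  then have "coeff (coeff p i) j = 0" for i j
    using coeff_coeff_grade_embed[of p "i + j" j] by simp
  then show "p = 0" by (metis leading_coeff_0_iff)
qed (simp add: grade_embed_def)

lemma tdeg_le_iff: "tdeg p \<le> d \<longleftrightarrow> (\<forall>i j. coeff (coeff p i) j \<noteq> 0 \<longrightarrow> i + j \<le> d)"
proof -
  have "finite {i + degree (coeff p i) | i. coeff p i \<noteq> 0}"
    by (rule finite_subset[of _ "(\<lambda>i. i + degree (coeff p i)) ` {..degree p}"])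
      (auto intro: le_degree)
  then have "tdeg p \<le> d \<longleftrightarrow> (\<forall>i. coeff p i \<noteq> 0 \<longrightarrow> i + degree (coeff p i) \<le> d)"
    unfolding tdeg_def by auto
  also have "\<dots> \<longleftrightarrow> (\<forall>i j. coeff (coeff p i) j \<noteq> 0 \<longrightarrow> i + j \<le> d)"
  proof (intro iffI allI impI)
    fix i j assume le: "\<forall>i. coeff p i \<noteq> 0 \<longrightarrow> i + degree (coeff p i) \<le> d"
      and ij: "coeff (coeff p i) j \<noteq> 0"
    then have "j \<le> degree (coeff p i)" "coeff p i \<noteq> 0" by (auto intro: le_degree)
    with le show "i + j \<le> d" by force
  next
    fix i assume le: "\<forall>i j. coeff (coeff p i) j \<noteq> 0 \<longrightarrow> i + j \<le> d"
      and "coeff p i \<noteq> 0"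
    then show "i + degree (coeff p i) \<le> d" by simp
  qed
  finally show ?thesis .
qed

lemma degree_grade_embed_le_iff:
  "degree (grade_embed p) \<le> d \<longleftrightarrow> (\<forall>i j. coeff (coeff p i) j \<noteq> 0 \<longrightarrow> i + j \<le> d)"
proof
  assume deg: "degree (grade_embed p) \<le> d"
  show "\<forall>i j. coeff (coeff p i) j \<noteq> 0 \<longrightarrow> i + j \<le> d"
  proof (intro allI impI)
    fix i j assume "coeff (coeff p i) j \<noteq> 0"
    then have "coeff (grade_embed p) (i + j) \<noteq> 0"
      using coeff_coeff_grade_embed[of p "i + j" j] by auto
    then show "i + j \<le> d" using deg le_degree order_trans by blast
  qed
next
  assume "\<forall>i j. coeff (coeff p i) j \<noteq> 0 \<longrightarrow> i + j \<le> d"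
  then have "coeff (grade_embed p) k = 0" if "d < k" for k
    using that
    by (intro poly_eqI) (simp add: coeff_coeff_grade_embed, metis le_add_diff_inverse2 leD)
  then show "degree (grade_embed p) \<le> d" by (rule degree_le[rule_format])
qed

lemma tdeg_eq_degree_grade_embed: "tdeg p = degree (grade_embed p)"
  using tdeg_le_iff[of p "degree (grade_embed p)"] tdeg_le_iff[of p "tdeg p"]
    degree_grade_embed_le_iff[of p "degree (grade_embed p)"]
    degree_grade_embed_le_iff[of p "tdeg p"]
  by simp

lemma tdeg_mult: "p \<noteq> 0 \<Longrightarrow> q \<noteq> 0 \<Longrightarrow> tdeg (p * q) = tdeg p + tdeg q"
  by (simp add: tdeg_eq_degree_grade_embed grade_embed_mult degree_mult_eq)

lemma tdeg_mult_le: "tdeg (p * q) \<le> tdeg p + tdeg q"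
  by (simp add: tdeg_eq_degree_grade_embed grade_embed_mult degree_mult_le)

lemma tdeg_add_le: "tdeg (p + q) \<le> max (tdeg p) (tdeg q)"
  by (simp add: tdeg_eq_degree_grade_embed grade_embed_add degree_add_le)

lemma tdeg_add_eq_left: "tdeg q < tdeg p \<Longrightarrow> tdeg (p + q) = tdeg p"
  by (simp add: tdeg_eq_degree_grade_embed grade_embed_add degree_add_eq_left)

lemma tdeg_add_eq_right: "tdeg p < tdeg q \<Longrightarrow> tdeg (p + q) = tdeg q"
  by (simp add: tdeg_eq_degree_grade_embed grade_embed_add degree_add_eq_right)

section \<open>Pairs of binary quadratic forms\<close>

definition quad_resultant :: "'a::comm_ring_1 \<Rightarrow> 'a \<Rightarrow> 'a \<Rightarrow> 'a \<Rightarrow> 'a \<Rightarrow> 'a" where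
  "quad_resultant c1 c2 c3 c5 c6 =
     c3^4 - c2*c3^2*c5 + c2^2*c3*c6 + c1*c3*c5^2 - 2*c1*c3^2*c6 - c1*c2*c5*c6 + c1^2*c6^2"

lemma quadratic_forms_coprime:
  fixes x y :: "'a::{idom,ring_gcd}"
  assumes "coprime x y" and unit: "is_unit (quad_resultant c1 c2 c3 c5 c6)"
  shows "coprime (c3*x^2 + c5*x*y + c6*y^2) (c1*x^2 + c2*x*y + c3*y^2)"
proof (rule coprimeI)
  fix d assume F: "d dvd c3*x^2 + c5*x*y + c6*y^2" and G: "d dvd c1*x^2 + c2*x*y + c3*y^2"
  let ?R = "quad_resultant c1 c2 c3 c5 c6"
  have "?R * x^3 = ((c3^3 - c2*c3*c5 + c2^2*c6 - c1*c3*c6)*x + (c2*c3*c6 - c3^2*c5)*y)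
        * (c3*x^2 + c5*x*y + c6*y^2)
      + ((c3*c5^2 - c3^2*c6 - c2*c5*c6 + c1*c6^2)*x + (c3*c5*c6 - c2*c6^2)*y)
        * (c1*x^2 + c2*x*y + c3*y^2)"
    unfolding quad_resultant_def by algebra
  then have "d dvd ?R * x^3" using F G by (simp add: dvd_add dvd_mult)
  then have x3: "d dvd x^3" using unit by (simp add: dvd_mult_unit_iff')
  have "?R * y^3 = ((c1*c2*c3 - c1^2*c5)*x + (c2^2*c3 - c1*c3^2 - c1*c2*c5 + c1^2*c6)*y)
        * (c3*x^2 + c5*x*y + c6*y^2)
      + ((c1*c3*c5 - c2*c3^2)*x + (c3^3 - c2*c3*c5 + c1*c5^2 - c1*c3*c6)*y)
        * (c1*x^2 + c2*x*y + c3*y^2)"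
    unfolding quad_resultant_def by algebra
  then have "d dvd ?R * y^3" using F G by (simp add: dvd_add dvd_mult)
  then have y3: "d dvd y^3" using unit by (simp add: dvd_mult_unit_iff')
  show "is_unit d"
    using coprime_common_divisor[OF _ x3 y3] \<open>coprime x y\<close> by simp
qed

lemma coprime_quadratic_form_left:
  fixes a :: "'a::semiring_gcd"
  assumes "coprime a (c6 * y^2)"
  shows "coprime a (c3 * (p * a)^2 + c5 * (p * a) * y + c6 * y^2)"
proof -
  have "c3 * (p * a)^2 + c5 * (p * a) * y + c6 * y^2 = (c3 * p^2 * a + c5 * p * y) * a + c6 * y^2"
    by (simp add: algebra_simps power2_eq_square)
  then show ?thesis
    using assms by (simp add: coprime_iff_gcd_eq_1 gcd_add_mult)
qed

lemma coprime_quadratic_form_right: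
  fixes b :: "'a::semiring_gcd"
  assumes "coprime b (c3 * x^2)"
  shows "coprime b (c3 * x^2 + c5 * x * (q * b) + c6 * (q * b)^2)"
proof -
  have "c3 * x^2 + c5 * x * (q * b) + c6 * (q * b)^2 = (c5 * x * q + c6 * q^2 * b) * b + c3 * x^2"
    by (simp add: algebra_simps power2_eq_square)
  then show ?thesis
    using assms by (simp add: coprime_iff_gcd_eq_1 gcd_add_mult)
qed

text \<open>The step behind the Laurent property: modulo \<open>x\<close>,
  \<open>(a b)\<^sup>2 F(c a', k b') \<equiv> r t d\<^sup>4 F(k a, c b)\<close> for \<open>F = r X\<^sup>2 + s X Y + t Y\<^sup>2\<close>.\<close>

lemma quadratic_form_laurent_dvd:
  fixes x :: "'a::{idom,ring_gcd}"
  assumes "a' * a = r*(p*x)^2 + s*(p*x)*d + t*d^2"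
    and "b' * b = u*(p*x)^2 + v*(p*x)*d + r*d^2"
    and prev: "r*(k*a)^2 + s*(k*a)*(c*b) + t*(c*b)^2 = x * z"
    and "coprime x (a * b)"
  shows "x dvd r*(c*a')^2 + s*(c*a')*(k*b') + t*(k*b')^2"
proof -
  let ?F = "r*(c*a')^2 + s*(c*a')*(k*b') + t*(k*b')^2"
  have "x dvd (a*b)^2 * ?F - r*t*d^4 * (r*(k*a)^2 + s*(k*a)*(c*b) + t*(c*b)^2)"
    using assms(1,2) unfolding dvd_def by algebra
  then have "x dvd (a*b)^2 * ?F"
    unfolding prev by (metis diff_add_cancel dvd_add dvd_mult dvd_triv_left)
  then show ?thesis
    using \<open>coprime x (a * b)\<close> by (simp add: coprime_dvd_mult_right_iff)
qed

lemma lift_eq_to_fract: "lift c = to_fract [:c:]"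
  by (simp add: lift_def to_fract_def)

lemma lift_eq_0_iff [simp]: "lift c = 0 \<longleftrightarrow> c = 0"
  by (simp add: lift_eq_to_fract)

lemma var_nonzero [simp]: "var \<noteq> 0"
  by (simp add: var_def Zero_fract_def eq_fract)

lemma lift_add: "lift (x + y) = lift x + lift y"
  and lift_diff: "lift (x - y) = lift x - lift y"
  and lift_mult: "lift (x * y) = lift x * lift y"
  and lift_1: "lift 1 = 1"
  by (simp_all add: lift_def ac_simps One_fract_def one_pCons)

lemma lift_2: "lift 2 = 2"
  using lift_add[of 1 1] by (simp add: lift_1 one_add_one)

lemma lift_power: "lift (x ^ n) = lift x ^ n"
  by (induction n) (simp_all add: lift_mult lift_1)

lemma a_nonzero: "a1 \<noteq> 0" "a2 \<noteq> 0" "a3 \<noteq> 0" "a5 \<noteq> 0" "a6 \<noteq> 0"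
  by (simp_all add: a1_def a2_def a3_def a5_def a6_def)

text \<open>As a polynomial in \<open>a\<^sub>6\<close> the resultant has leading coefficient \<open>a\<^sub>1\<^sup>2\<close>.\<close>

lemma quad_resultant_nonzero: "quad_resultant a1 a2 a3 a5 a6 \<noteq> 0"
proof -
  define b1 :: K4 where "b1 = lift (lift (lift var))"
  define b2 :: K4 where "b2 = lift (lift var)"
  define b3 :: K4 where "b3 = lift var"
  define b5 :: K4 where "b5 = var"
  have a: "a1 = lift b1" "a2 = lift b2" "a3 = lift b3" "a5 = lift b5" "a6 = var"
    by (simp_all add: b1_def b2_def b3_def b5_def a1_def a2_def a3_def a5_def a6_def)
  have "quad_resultant a1 a2 a3 a5 a6 =
      lift (b3^4 - b2*b3^2*b5 + b1*b3*b5^2) + lift (b2^2*b3 - 2*b1*b3^2 - b1*b2*b5) * var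
      + lift (b1^2) * var^2"
    unfolding quad_resultant_def a
    by (simp add: lift_add lift_diff lift_mult lift_power lift_2 algebra_simps)
  also have "\<dots> = to_fract [:b3^4 - b2*b3^2*b5 + b1*b3*b5^2, b2^2*b3 - 2*b1*b3^2 - b1*b2*b5, b1^2:]"
    by (simp add: lift_eq_to_fract var_def to_fract_def power2_eq_square)
  also have "\<dots> \<noteq> 0"
    by (simp add: b1_def)
  finally show ?thesis .
qed

definition bconst :: "'a::zero \<Rightarrow> 'a poly poly" where
  "bconst c = [:[:c:]:]"

lemma
  fixes x y :: "'a::comm_ring_1"
  shows bconst_add: "bconst (x + y) = bconst x + bconst y"
    and bconst_diff: "bconst (x - y) = bconst x - bconst y"
    and bconst_mult: "bconst (x * y) = bconst x * bconst y"
    and bconst_1: "bconst 1 = (1 :: 'a poly poly)"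
    and bconst_eq_0_iff [simp]: "bconst x = 0 \<longleftrightarrow> x = 0"
  by (simp_all add: bconst_def one_pCons)

lemma bconst_power: "bconst (x ^ n) = bconst (x::'a::comm_ring_1) ^ n"
  by (induction n) (simp_all add: bconst_mult bconst_1)

lemma bconst_quad_resultant:
  fixes c1 c2 c3 c5 c6 :: "'a::comm_ring_1"
  shows "bconst (quad_resultant c1 c2 c3 c5 c6) =
     quad_resultant (bconst c1) (bconst c2) (bconst c3) (bconst c5) (bconst c6)"
  using bconst_add[of "1::'a" 1]
  by (simp add: quad_resultant_def bconst_add bconst_diff bconst_mult bconst_power bconst_1
      one_add_one)

lemma is_unit_bconst: "(c::'a::field) \<noteq> 0 \<Longrightarrow> is_unit (bconst c)"
  by (metis bconst_1 bconst_mult dvdI right_inverse)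

lemma to_fract_bconst: "to_fract (bconst c) = cst c"
  by (simp add: to_fract_def bconst_def cst_def)

lemma tdeg_bconst: "tdeg (bconst c) = 0"
  by (simp add: tdeg_eq_degree_grade_embed bconst_def grade_embed_pCons diag_embed_pCons)

lemma tdeg_0 [simp]: "tdeg 0 = 0"
  by (simp add: tdeg_eq_degree_grade_embed)

lemma tdeg_1 [simp]: "tdeg 1 = 0"
  using tdeg_bconst[of 1] by (simp add: bconst_1)

definition const_term :: "'a::zero poly poly \<Rightarrow> 'a" where
  "const_term p = coeff (coeff p 0) 0"

lemma const_term_add: "const_term (p + q) = const_term p + const_term q"
  and const_term_mult: "const_term (p * q) = const_term p * const_term q"
  and const_term_bconst [simp]: "const_term (bconst c) = c"
  and const_term_1 [simp]: "const_term 1 = 1"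
  by (simp_all add: const_term_def coeff_mult_0 bconst_def one_pCons)

lemma const_term_nonzero_imp_nonzero: "const_term p \<noteq> 0 \<Longrightarrow> p \<noteq> 0"
  by (auto simp: const_term_def)

definition U0_poly :: bipoly where "U0_poly = [:[:0, 1:]:]"
definition U1_poly :: bipoly where "U1_poly = [:0, 1:]"

lemma U_poly_nonzero [simp]: "U0_poly \<noteq> 0" "U1_poly \<noteq> 0"
  by (simp_all add: U0_poly_def U1_poly_def)

lemma const_term_U_poly [simp]: "const_term U0_poly = 0" "const_term U1_poly = 0"
  by (simp_all add: const_term_def U0_poly_def U1_poly_def)

lemma tdeg_U_poly: "tdeg U0_poly = 1" "tdeg U1_poly = 1"
  by (simp_all add: tdeg_eq_degree_grade_embed U0_poly_def U1_poly_def grade_embed_pCons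
      diag_embed_pCons degree_monom_eq)

lemma coprime_U_poly_if_const_term:
  assumes "const_term p \<noteq> 0" and "u = U0_poly \<or> u = U1_poly"
  shows "coprime u p"
proof (rule prime_elem_imp_coprime)
  show "prime_elem u"
    using assms(2) prime_elem_linear_poly[of 1 0] prime_elem_linear_field_poly[of "1::K5" 0]
    by (auto simp: U0_poly_def U1_poly_def prime_elem_const_poly_iff)
  show "\<not> u dvd p"
    using assms by (auto elim!: dvdE simp: const_term_mult)
qed

definition period_factor :: "nat \<Rightarrow> bipoly" where
  "period_factor n = (if n mod 4 = 0 then U0_poly else if n mod 4 = 1 then U1_poly else 1)"

lemma period_factor_nonzero [simp]: "period_factor n \<noteq> 0"
  by (simp add: period_factor_def)

lemma period_factor_Suc4: "period_factor (Suc (Suc (Suc (Suc k)))) = period_factor k"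
  by (simp add: period_factor_def)

lemma coprime_period_factor: "const_term p \<noteq> 0 \<Longrightarrow> coprime (period_factor k) p"
  by (simp add: period_factor_def coprime_U_poly_if_const_term)

lemma coprime_period_factor_Suc_Suc: "coprime (period_factor k) (period_factor (Suc (Suc k)))"
  by (auto simp: period_factor_def) presburger+

lemma period_factor_cases:
  "const_term (period_factor k) = 0 \<and> tdeg (period_factor k) = 1 \<and> period_factor (Suc (Suc k)) = 1
   \<or> period_factor k = 1 \<and> const_term (period_factor (Suc (Suc k))) = 0
       \<and> tdeg (period_factor (Suc (Suc k))) = 1"
  by (auto simp: period_factor_def tdeg_U_poly) presburger+

lemma tdeg_quadratic_form:
  assumes "c1 \<noteq> 0" "c3 \<noteq> 0" "x \<noteq> 0" "y \<noteq> 0"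
    and deg: "tdeg x = k + 1 \<and> tdeg y = k \<or> tdeg x = k \<and> tdeg y = k + 1"
  shows "tdeg (bconst c1 * x^2 + bconst c2 * x * y + bconst c3 * y^2) = 2 * k + 2"
proof -
  have sq: "tdeg (bconst c * z^2) = 2 * tdeg z" if "c \<noteq> 0" "z \<noteq> 0" for c z
    using that by (simp add: tdeg_mult tdeg_bconst power2_eq_square)
  have mixed: "tdeg (bconst c2 * x * y) \<le> 2 * k + 1"
    using tdeg_mult_le[of "bconst c2 * x" y] tdeg_mult_le[of "bconst c2" x] deg
    by (simp add: tdeg_bconst) linarith
  from deg show ?thesis
  proof
    assume deg': "tdeg x = k + 1 \<and> tdeg y = k"
    have "tdeg (bconst c2 * x * y + bconst c3 * y^2) \<le> 2 * k + 1"
      using tdeg_add_le[of "bconst c2 * x * y" "bconst c3 * y^2"] mixed sq[of c3 y] assms deg'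
      by simp
    then show ?thesis
      using tdeg_add_eq_left[of "bconst c2 * x * y + bconst c3 * y^2" "bconst c1 * x^2"]
        sq[of c1 x] assms deg' by (simp add: add.assoc)
  next
    assume deg': "tdeg x = k \<and> tdeg y = k + 1"
    have "tdeg (bconst c1 * x^2 + bconst c2 * x * y) \<le> 2 * k + 1"
      using tdeg_add_le[of "bconst c1 * x^2" "bconst c2 * x * y"] mixed sq[of c1 x] assms deg'
      by simp
    then show ?thesis
      using tdeg_add_eq_right[of _ "bconst c3 * y^2"] sq[of c3 y] assms deg' by simp
  qed
qed

definition num_form :: "bipoly \<Rightarrow> bipoly \<Rightarrow> bipoly" where
  "num_form x y = bconst a3 * x^2 + bconst a5 * x * y + bconst a6 * y^2"

definition den_form :: "bipoly \<Rightarrow> bipoly \<Rightarrow> bipoly" where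
  "den_form x y = bconst a1 * x^2 + bconst a2 * x * y + bconst a3 * y^2"

lemma coprime_num_den_form: "coprime x y \<Longrightarrow> coprime (num_form x y) (den_form x y)"
  using quadratic_forms_coprime[of x y "bconst a1" "bconst a2" "bconst a3" "bconst a5" "bconst a6"]
    is_unit_bconst[OF quad_resultant_nonzero]
  by (simp add: num_form_def den_form_def bconst_quad_resultant)

lemma const_term_forms_nonzero:
  assumes "const_term x = 0 \<and> const_term y \<noteq> 0 \<or> const_term x \<noteq> 0 \<and> const_term y = 0"
  shows "const_term (num_form x y) \<noteq> 0" "const_term (den_form x y) \<noteq> 0"
  using assms a_nonzero
  by (auto simp: num_form_def den_form_def const_term_add const_term_mult power2_eq_square)

lemma tdeg_forms:
  assumes "x \<noteq> 0" "y \<noteq> 0" "tdeg x = k + 1 \<and> tdeg y = k \<or> tdeg x = k \<and> tdeg y = k + 1"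
  shows "tdeg (num_form x y) = 2 * k + 2" "tdeg (den_form x y) = 2 * k + 2"
  using assms a_nonzero by (simp_all add: num_form_def den_form_def tdeg_quadratic_form)

lemma to_fract_num_form:
    "to_fract (num_form x y) =
       cst a3 * to_fract x ^ 2 + cst a5 * to_fract x * to_fract y + cst a6 * to_fract y ^ 2"
  and to_fract_den_form:
    "to_fract (den_form x y) =
       cst a1 * to_fract x ^ 2 + cst a2 * to_fract x * to_fract y + cst a3 * to_fract y ^ 2"
  by (simp_all add: num_form_def den_form_def to_fract_bconst power2_eq_square)

section \<open>Factorization of the iterates\<close>

fun qrt_A :: "nat \<Rightarrow> bipoly" and qrt_B :: "nat \<Rightarrow> bipoly" where
  "qrt_A 0 = 1"
| "qrt_A (Suc 0) = 1"
| "qrt_A (Suc (Suc n)) =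
     num_form (period_factor (Suc n) * qrt_A (Suc n))
       (period_factor (Suc (Suc (Suc n))) * qrt_B (Suc n)) div qrt_A n"
| "qrt_B 0 = 1"
| "qrt_B (Suc 0) = 1"
| "qrt_B (Suc (Suc n)) =
     den_form (period_factor (Suc n) * qrt_A (Suc n))
       (period_factor (Suc (Suc (Suc n))) * qrt_B (Suc n)) div qrt_B n"

definition qrt_N :: "nat \<Rightarrow> bipoly" where
  "qrt_N n = period_factor n * qrt_A n"

definition qrt_D :: "nat \<Rightarrow> bipoly" where
  "qrt_D n = period_factor (Suc (Suc n)) * qrt_B n"

lemma qrt_A_Suc_Suc: "qrt_A (Suc (Suc n)) = num_form (qrt_N (Suc n)) (qrt_D (Suc n)) div qrt_A n"
  and qrt_B_Suc_Suc: "qrt_B (Suc (Suc n)) = den_form (qrt_N (Suc n)) (qrt_D (Suc n)) div qrt_B n"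
  by (simp_all add: qrt_N_def qrt_D_def)

definition regular :: "nat \<Rightarrow> bool" where
  "regular n \<longleftrightarrow> const_term (qrt_A n) \<noteq> 0 \<and> const_term (qrt_B n) \<noteq> 0 \<and> coprime (qrt_A n) (qrt_B n)
     \<and> tdeg (qrt_A n) = n * (n - 1) \<and> tdeg (qrt_B n) = n * (n - 1)"

definition exact_recurrence :: "nat \<Rightarrow> bool" where
  "exact_recurrence n \<longleftrightarrow>
     qrt_A (Suc (Suc n)) * qrt_A n = num_form (qrt_N (Suc n)) (qrt_D (Suc n)) \<and>
     qrt_B (Suc (Suc n)) * qrt_B n = den_form (qrt_N (Suc n)) (qrt_D (Suc n))"

lemma regular_0: "regular 0" and regular_1: "regular 1"
  by (simp_all add: regular_def)

lemma exact_recurrence_0: "exact_recurrence 0" and exact_recurrence_1: "exact_recurrence 1"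
  by (simp_all add: exact_recurrence_def qrt_A_Suc_Suc qrt_B_Suc_Suc
      del: qrt_A.simps(3) qrt_B.simps(3))

lemma coprime_qrt_N_D: "regular n \<Longrightarrow> coprime (qrt_N n) (qrt_D n)"
  using coprime_period_factor_Suc_Suc[of n] coprime_period_factor[of "qrt_B n" n]
    coprime_period_factor[of "qrt_A n" "Suc (Suc n)"]
  by (simp add: regular_def qrt_N_def qrt_D_def coprime_commute)

lemma qrt_N_D_cases:
  assumes "regular n"
  shows "const_term (qrt_N n) = 0 \<and> const_term (qrt_D n) \<noteq> 0
      \<and> tdeg (qrt_N n) = n * (n - 1) + 1 \<and> tdeg (qrt_D n) = n * (n - 1)
    \<or> const_term (qrt_N n) \<noteq> 0 \<and> const_term (qrt_D n) = 0
      \<and> tdeg (qrt_N n) = n * (n - 1) \<and> tdeg (qrt_D n) = n * (n - 1) + 1"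
proof -
  have "qrt_A n \<noteq> 0" "qrt_B n \<noteq> 0"
    using assms by (simp_all add: regular_def const_term_nonzero_imp_nonzero)
  then show ?thesis
    using period_factor_cases[of n] assms
    by (auto simp: regular_def qrt_N_def qrt_D_def const_term_mult tdeg_mult)
qed

lemma regular_Suc_Suc:
  assumes reg: "regular n" and reg': "regular (Suc n)" and rec: "exact_recurrence n"
  shows "regular (Suc (Suc n))"
proof -
  let ?F = "num_form (qrt_N (Suc n)) (qrt_D (Suc n))"
  let ?G = "den_form (qrt_N (Suc n)) (qrt_D (Suc n))"
  have F: "qrt_A (Suc (Suc n)) * qrt_A n = ?F" and G: "qrt_B (Suc (Suc n)) * qrt_B n = ?G"
    using rec by (simp_all add: exact_recurrence_def)
  have ND: "qrt_N (Suc n) \<noteq> 0" "qrt_D (Suc n) \<noteq> 0"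
    using qrt_N_D_cases[OF reg'] by (auto simp: const_term_nonzero_imp_nonzero)
  have const: "const_term ?F \<noteq> 0" "const_term ?G \<noteq> 0"
    using qrt_N_D_cases[OF reg'] const_term_forms_nonzero by blast+
  have deg: "tdeg ?F = 2 * (Suc n * n) + 2" "tdeg ?G = 2 * (Suc n * n) + 2"
    using qrt_N_D_cases[OF reg'] tdeg_forms[OF ND, of "Suc n * n"] by auto
  have "coprime ?F ?G"
    using coprime_num_den_form coprime_qrt_N_D[OF reg'] by blast
  then have cop: "coprime (qrt_A (Suc (Suc n))) (qrt_B (Suc (Suc n)))"
    by (simp flip: F G)
  have const': "const_term (qrt_A (Suc (Suc n))) \<noteq> 0" "const_term (qrt_B (Suc (Suc n))) \<noteq> 0"
    using const by (simp_all flip: F G add: const_term_mult)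
  have "n * (n - 1) + Suc (Suc n) * Suc n = 2 * (Suc n * n) + 2"
    by (cases n) (simp_all add: algebra_simps)
  then have "tdeg (qrt_A (Suc (Suc n))) = Suc (Suc n) * Suc n"
    "tdeg (qrt_B (Suc (Suc n))) = Suc (Suc n) * Suc n"
    using deg const' reg
    by (simp_all flip: F G add: tdeg_mult const_term_nonzero_imp_nonzero regular_def)
  with cop const' show ?thesis
    by (simp add: regular_def)
qed

lemma coprime_qrt_Suc_Suc:
  assumes reg: "regular (Suc n)" and rec: "exact_recurrence n"
  shows "coprime (qrt_A (Suc (Suc n))) (qrt_A (Suc n) * qrt_B (Suc n))"
    and "coprime (qrt_B (Suc (Suc n))) (qrt_A (Suc n) * qrt_B (Suc n))"
proof -
  define a where "a = qrt_A (Suc n)"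
  define b where "b = qrt_B (Suc n)"
  define p where "p = period_factor (Suc n)"
  define q where "q = period_factor (Suc (Suc (Suc n)))"
  have ab: "const_term a \<noteq> 0" "const_term b \<noteq> 0" "coprime a b"
    using reg by (simp_all add: regular_def a_def b_def)
  have unit: "coprime z (bconst c)" if "c \<noteq> 0" for z :: bipoly and c :: K5
    by (rule is_unit_right_imp_coprime[OF is_unit_bconst[OF that]])
  have cop: "coprime a (bconst c * (q * b)^2)" "coprime b (bconst c * (p * a)^2)" if "c \<noteq> 0" for c
    using ab unit[OF that] coprime_period_factor[of a] coprime_period_factor[of b]
    by (simp_all add: p_def q_def coprime_commute)
  have "coprime a (qrt_A (Suc (Suc n)) * qrt_A n)" "coprime b (qrt_A (Suc (Suc n)) * qrt_A n)"
    "coprime a (qrt_B (Suc (Suc n)) * qrt_B n)" "coprime b (qrt_B (Suc (Suc n)) * qrt_B n)"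
    using rec cop[OF a_nonzero(5)] cop[OF a_nonzero(3)] cop[OF a_nonzero(1)]
    by (simp_all add: exact_recurrence_def qrt_N_def qrt_D_def num_form_def den_form_def
        coprime_quadratic_form_left coprime_quadratic_form_right
        flip: a_def b_def p_def q_def)
  then show "coprime (qrt_A (Suc (Suc n))) (qrt_A (Suc n) * qrt_B (Suc n))"
    and "coprime (qrt_B (Suc (Suc n))) (qrt_A (Suc n) * qrt_B (Suc n))"
    by (simp_all add: a_def b_def coprime_commute)
qed

lemma exact_recurrence_Suc_Suc:
  assumes reg: "regular (Suc n)" and rec: "exact_recurrence n" and rec': "exact_recurrence (Suc n)"
  shows "exact_recurrence (Suc (Suc n))"
proof -
  define x where "x = qrt_A (Suc (Suc n))"
  define y where "y = qrt_B (Suc (Suc n))"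
  define N where "N = qrt_N (Suc (Suc (Suc n)))"
  define D where "D = qrt_D (Suc (Suc (Suc n)))"
  have N: "N = period_factor (Suc (Suc (Suc n))) * qrt_A (Suc (Suc (Suc n)))"
    and D: "D = period_factor (Suc n) * qrt_B (Suc (Suc (Suc n)))"
    by (simp_all add: N_def D_def qrt_N_def qrt_D_def period_factor_Suc4)
  have cop: "coprime x (qrt_A (Suc n) * qrt_B (Suc n))" "coprime y (qrt_B (Suc n) * qrt_A (Suc n))"
    using coprime_qrt_Suc_Suc[OF reg rec] by (simp_all add: x_def y_def ac_simps)
  have "x dvd num_form N D"
    using quadratic_form_laurent_dvd[where x = x and p = "period_factor (Suc (Suc n))"
        and d = "qrt_D (Suc (Suc n))" and k = "period_factor (Suc n)"
        and c = "period_factor (Suc (Suc (Suc n)))" and z = "qrt_A n"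
        and a' = "qrt_A (Suc (Suc (Suc n)))" and a = "qrt_A (Suc n)"
        and b' = "qrt_B (Suc (Suc (Suc n)))" and b = "qrt_B (Suc n)"
        and r = "bconst a3" and s = "bconst a5" and t = "bconst a6"
        and u = "bconst a1" and v = "bconst a2", OF _ _ _ cop(1)]
      rec rec'
    by (simp add: N D x_def exact_recurrence_def num_form_def den_form_def qrt_N_def qrt_D_def
        ac_simps)
  moreover
  \<comment> \<open>the same step, with the two forms and the two coordinates exchanged\<close>
  have "y dvd den_form N D"
    using quadratic_form_laurent_dvd[where x = y and p = "period_factor (Suc (Suc (Suc (Suc n))))"
        and d = "qrt_N (Suc (Suc n))" and k = "period_factor (Suc (Suc (Suc n)))"
        and c = "period_factor (Suc n)" and z = "qrt_B n"
        and a' = "qrt_B (Suc (Suc (Suc n)))" and a = "qrt_B (Suc n)"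
        and b' = "qrt_A (Suc (Suc (Suc n)))" and b = "qrt_A (Suc n)"
        and r = "bconst a3" and s = "bconst a2" and t = "bconst a1"
        and u = "bconst a6" and v = "bconst a5", OF _ _ _ cop(2)]
      rec rec'
    by (simp add: N D y_def exact_recurrence_def num_form_def den_form_def qrt_N_def qrt_D_def
        ac_simps)
  ultimately show ?thesis
    by (simp add: exact_recurrence_def qrt_A_Suc_Suc qrt_B_Suc_Suc x_def y_def N_def D_def
        del: qrt_A.simps(3) qrt_B.simps(3))
qed

lemma qrt_invariants:
  "regular n \<and> regular (Suc n) \<and> exact_recurrence n \<and> exact_recurrence (Suc n)"
proof (induction n)
  case 0
  show ?case using regular_0 regular_1 exact_recurrence_0 exact_recurrence_1 by simp
next
  case (Suc n)
  then show ?case using regular_Suc_Suc exact_recurrence_Suc_Suc by blast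
qed

lemma qrt_fraction_step:
  fixes n d a a' b b' c c' :: "'a::field"
  assumes "d \<noteq> 0" "a \<noteq> 0" "b \<noteq> 0" "b' \<noteq> 0" "c \<noteq> 0" "c' \<noteq> 0"
    and num: "r * n^2 + s * n * d + t * d^2 = a' * a"
    and den: "u * n^2 + v * n * d + r * d^2 = b' * b"
  shows "(r * (n/d)^2 + s * (n/d) + t) / ((u * (n/d)^2 + v * (n/d) + r) * ((c * a) / (c' * b)))
    = (c' * a') / (c * b')"
proof -
  have "r * (n/d)^2 + s * (n/d) + t = (a' * a) / d^2"
    unfolding num[symmetric] using \<open>d \<noteq> 0\<close> by (simp add: field_simps power2_eq_square)
  moreover have "u * (n/d)^2 + v * (n/d) + r = (b' * b) / d^2"
    unfolding den[symmetric] using \<open>d \<noteq> 0\<close> by (simp add: field_simps power2_eq_square)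
  ultimately show ?thesis
    using assms(1-6) by (simp add: field_simps power2_eq_square)
qed

lemma qrt_u_eq_Fract: "qrt_u n = Fract (qrt_N n) (qrt_D n)"
proof (induction n rule: qrt_u.induct)
  case 1
  show ?case by (simp add: U0_def qrt_N_def qrt_D_def period_factor_def U0_poly_def)
next
  case 2
  show ?case by (simp add: U1_def qrt_N_def qrt_D_def period_factor_def U1_poly_def)
next
  case (3 n)
  have reg: "regular n" "regular (Suc n)" "regular (Suc (Suc n))"
    using qrt_invariants[of n] qrt_invariants[of "Suc n"] by simp_all
  have recA: "to_fract (qrt_A (Suc (Suc n))) * to_fract (qrt_A n)
      = to_fract (num_form (qrt_N (Suc n)) (qrt_D (Suc n)))"
    and recB: "to_fract (qrt_B (Suc (Suc n))) * to_fract (qrt_B n)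
      = to_fract (den_form (qrt_N (Suc n)) (qrt_D (Suc n)))"
    using qrt_invariants[of n]
    by (simp_all add: exact_recurrence_def flip: to_fract_mult del: qrt_A.simps qrt_B.simps)
  have nonzero: "qrt_A n \<noteq> 0" "qrt_B n \<noteq> 0" "qrt_B (Suc (Suc n)) \<noteq> 0" "qrt_D (Suc n) \<noteq> 0"
    using reg qrt_N_D_cases[of "Suc n"] by (auto simp: regular_def const_term_nonzero_imp_nonzero)
  have "qrt_u (Suc (Suc n)) =
      to_fract (period_factor (Suc (Suc n)) * qrt_A (Suc (Suc n)))
      / to_fract (period_factor n * qrt_B (Suc (Suc n)))"
    unfolding qrt_u.simps 3 Fract_conv_to_fract qrt_N_def[of n] qrt_D_def[of n] to_fract_mult
    by (rule qrt_fraction_step)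
      (use nonzero recA recB in \<open>simp_all add: to_fract_num_form to_fract_den_form\<close>)
  then show ?case
    by (simp add: Fract_conv_to_fract qrt_N_def qrt_D_def period_factor_Suc4)
qed

theorem theorem3:
  fixes n :: nat
  shows "\<exists>P Q :: bipoly. Q \<noteq> 0 \<and> coprime P Q \<and> qrt_u n = Fract P Q \<and>
           max (tdeg P) (tdeg Q) = n^2 - n + 1"
proof (intro exI conjI)
  have reg: "regular n" using qrt_invariants by blast
  show "qrt_D n \<noteq> 0"
    using qrt_N_D_cases[OF reg] by (auto simp: const_term_nonzero_imp_nonzero)
  show "coprime (qrt_N n) (qrt_D n)" by (rule coprime_qrt_N_D[OF reg])
  show "qrt_u n = Fract (qrt_N n) (qrt_D n)" by (rule qrt_u_eq_Fract)
  have "n^2 - n + 1 = n * (n - 1) + 1"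
    by (simp add: power2_eq_square diff_mult_distrib2)
  then show "max (tdeg (qrt_N n)) (tdeg (qrt_D n)) = n^2 - n + 1"
    using qrt_N_D_cases[OF reg] by auto
qed

end
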